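(* Let $\mathsf{G}$ be a connected undirected graph on $N=\{1,\dots,n\}$ with edge set $E$ and symmetric positive edge weights $w_{ij}=w_{ji}>0$ for $\{i,j\}\in E$, and let $\mathbf{L}$ be its Laplacian, so that the symmetric irreducible consensus system reads $\dot x_i=\sum_{j:\{i,j\}\in E}w_{ij}(x_j-x_i)$, i.e. $\dot{\bm{x}}=-\mathbf{L}\bm{x}$. Fix $\alpha>0$ and let $M(\alpha)=\{\bm{x}\in\mathbb{R}^n_{>0}:\ \frac1n\sum_{i=1}^n x_i=\alpha\}$. For $\bm{x}\in M(\alpha)$ set $\bm{\rho}=\bm{x}/\alpha$. Let $H:\mathbb{R}_{>0}\to\mathbb{R}$ be a strictly convex $C^2$ function with $H''>0$, write $h=H'$, and let $$V(\bm{x})=\alpha\sum_{i=1}^n H(\rho_i)=\alpha\sum_{i=1}^n H(x_i/\alpha).$$ For $a,b>0$ define $K_h(a,b)=\dfrac{a-b}{h(a)-h(b)}$ if $a\neq b$ and $K_h(a,a)=1/H''(a)$. Define the $n\times n$ matrix $\mathbf{G}^{-1}(\bm{x})$ by $[\mathbf{G}^{-1}(\bm{x})]_{ij}=-\alpha\,w_{ij}K_h(\rho_i,\rho_j)$ for $\{i,j\}\in E$, $[\mathbf{G}^{-1}(\bm{x})]_{ij}=0$ for $i\ne j$ with $\{i,j\}\notin E$, and $[\mathbf{G}^{-1}(\bm{x})]_{ii}=\sum_{j:\{i,j\}\in E}\alpha\,w_{ij}K_h(\rho_i,\rho_j)$. Then for every $\bm{x}\in M(\alpha)$, $\mathbf{G}^{-1}(\bm{x})$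 is a symmetric positive semidefinite matrix with kernel $\{c\bm{1}:c\in\mathbb{R}\}$, its entries depend continuously on $\bm{x}$, and $$-\mathbf{L}\bm{x}=-\mathbf{G}^{-1}(\bm{x})\,\nabla V(\bm{x}).$$ That is, the consensus dynamics on $M(\alpha)$ is a gradient descent flow of $V$ with respect to the (Riemannian) structure defined by $\mathbf{G}^{-1}(\cdot)$.
   Context: The Laplacian of the weighted undirected graph is $\mathbf{L}=[l_{ij}]$ with $l_{ij}=-w_{ij}$ for $\{i,j\}\in E$, $l_{ij}=0$ for other $i\ne j$, and $l_{ii}=\sum_{j:\{i,j\}\in E}w_{ij}$. The consensus value of $\bm{x}(0)\in M(\alpha)$ is $\alpha$, and $M(\alpha)$ is invariant under the dynamics. The gradient $\nabla V$ is the Euclidean gradient with respect to $\bm{x}$, so $\partial V/\partial x_i=H'(\rho_i)$. *)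

theory Defs
  imports "HOL-Analysis.Analysis"
begin

definition strictly_convex_on :: "real set \<Rightarrow> (real \<Rightarrow> real) \<Rightarrow> bool" where
  "strictly_convex_on S f \<longleftrightarrow>
     (\<forall>x\<in>S. \<forall>y\<in>S. \<forall>t. x \<noteq> y \<and> 0 < t \<and> t < 1 \<longrightarrow>
        f ((1 - t) * x + t * y) < (1 - t) * f x + t * f y)"

definition connected_graph :: "('n \<Rightarrow> 'n \<Rightarrow> bool) \<Rightarrow> bool" where
  "connected_graph E \<longleftrightarrow> (\<forall>i j. E\<^sup>*\<^sup>* i j)"

definition laplacian :: "('n::finite \<Rightarrow> 'n \<Rightarrow> bool) \<Rightarrow> ('n \<Rightarrow> 'n \<Rightarrow> real) \<Rightarrow> real^'n^'n" where
  "laplacian E w = (\<chi> i j. if i = j then (\<Sum>k\<in>{k. E i k}. w i k)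
                           else if E i j then - w i j else 0)"

definition Mset :: "real \<Rightarrow> (real^'n::finite) set" where
  "Mset \<alpha> = {x. (\<forall>i. 0 < x $ i) \<and> (\<Sum>i\<in>UNIV. x $ i) / real CARD('n) = \<alpha>}"

text \<open>K_h(a,b); h is H', h2 is H''.\<close>
definition Kh :: "(real \<Rightarrow> real) \<Rightarrow> (real \<Rightarrow> real) \<Rightarrow> real \<Rightarrow> real \<Rightarrow> real" where
  "Kh h h2 a b = (if a \<noteq> b then (a - b) / (h a - h b) else 1 / h2 a)"

definition Ginv :: "('n::finite \<Rightarrow> 'n \<Rightarrow> bool) \<Rightarrow> ('n \<Rightarrow> 'n \<Rightarrow> real) \<Rightarrow> real
    \<Rightarrow> (real \<Rightarrow> real) \<Rightarrow> (real \<Rightarrow> real) \<Rightarrow> real^'n \<Rightarrow> real^'n^'n" where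
  "Ginv E w \<alpha> h h2 x = (\<chi> i j.
     if i = j then (\<Sum>k\<in>{k. E i k}. \<alpha> * w i k * Kh h h2 (x $ i / \<alpha>) (x $ k / \<alpha>))
     else if E i j then - (\<alpha> * w i j * Kh h h2 (x $ i / \<alpha>) (x $ j / \<alpha>)) else 0)"

definition Vfun :: "real \<Rightarrow> (real \<Rightarrow> real) \<Rightarrow> real^'n::finite \<Rightarrow> real" where
  "Vfun \<alpha> H x = \<alpha> * (\<Sum>i\<in>UNIV. H (x $ i / \<alpha>))"

definition psd_matrix :: "real^'n^'n::finite \<Rightarrow> bool" where
  "psd_matrix A \<longleftrightarrow> (\<forall>v. 0 \<le> v \<bullet> (A *v v))"

end

theory Submission
  imports Defs
begin

text \<open>Both \<open>L\<close> and \<open>G\<^sup>-\<^sup>1(x)\<close> are weighted Laplacians of the same graph, the latter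
  with the positive symmetric edge weights \<open>\<alpha> w\<^sub>i\<^sub>j K\<^sub>h(\<rho>\<^sub>i, \<rho>\<^sub>j)\<close>. Symmetry, positive
  semidefiniteness and the kernel spanned by \<open>1\<close> therefore follow from the quadratic form
  \<open>v \<bullet> L\<^sub>c v = 1/2 \<Sum> c\<^sub>i\<^sub>k (v\<^sub>i - v\<^sub>k)\<^sup>2\<close> (sum over ordered edges) and connectedness.
  The gradient of \<open>V\<close> is \<open>g\<^sub>i = h(\<rho>\<^sub>i)\<close>, and \<open>K\<^sub>h(\<rho>\<^sub>i, \<rho>\<^sub>k) (h(\<rho>\<^sub>i) - h(\<rho>\<^sub>k)) = \<rho>\<^sub>i - \<rho>\<^sub>k\<close>
  turns \<open>G\<^sup>-\<^sup>1(x) g\<close> into \<open>L x\<close> edge by edge. Continuity of \<open>K\<^sub>h\<close> on the diagonal comes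
  from the mean value theorem: \<open>K\<^sub>h(a, b) = 1 / H''(z)\<close> for some \<open>z\<close> between \<open>a\<close> and \<open>b\<close>.\<close>

lemma laplacian_mult_vec_nth:
  fixes E :: "'n::finite \<Rightarrow> 'n \<Rightarrow> bool"
  assumes irrefl: "\<And>i. \<not> E i i"
  shows "(laplacian E c *v v) $ i = (\<Sum>k\<in>{k. E i k}. c i k * (v$i - v$k))"
proof -
  have "(laplacian E c *v v) $ i = (\<Sum>j\<in>UNIV. (if i = j then (\<Sum>k\<in>{k. E i k}. c i k) * v$j else 0)
        + (if E i j then - c i j * v$j else 0))"
    unfolding laplacian_def matrix_vector_mult_def using irrefl
    by (auto intro!: sum.cong)
  also have "\<dots> = (\<Sum>k\<in>{k. E i k}. c i k) * v$i + (\<Sum>j\<in>{j. E i j}. - c i j * v$j)"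
    by (simp add: sum.distrib sum.inter_filter[symmetric])
  also have "\<dots> = (\<Sum>k\<in>{k. E i k}. c i k * (v$i - v$k))"
    by (simp add: sum_distrib_right sum_subtractf right_diff_distrib sum_negf)
  finally show ?thesis .
qed

lemma laplacian_quadratic_form:
  fixes E :: "'n::finite \<Rightarrow> 'n \<Rightarrow> bool"
  assumes irrefl: "\<And>i. \<not> E i i" and E_sym: "\<And>i j. E i j \<Longrightarrow> E j i"
    and c_sym: "\<And>i j. E i j \<Longrightarrow> c i j = c j i"
  shows "v \<bullet> (laplacian E c *v v)
    = (\<Sum>i\<in>UNIV. \<Sum>k\<in>UNIV. if E i k then c i k * (v$i - v$k)^2 else 0) / 2"
proof -
  define S where "S = (\<Sum>i\<in>UNIV. \<Sum>k\<in>UNIV. if E i k then c i k * v$i * (v$i - v$k) else 0)"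
  have form: "v \<bullet> (laplacian E c *v v) = S"
    unfolding S_def inner_vec_def laplacian_mult_vec_nth[where E=E, OF irrefl]
    by (simp add: sum_distrib_left sum.inter_filter[symmetric] mult.assoc mult.left_commute)
  have "S = (\<Sum>k\<in>UNIV. \<Sum>i\<in>UNIV. if E i k then c i k * v$i * (v$i - v$k) else 0)"
    unfolding S_def by (rule sum.swap)
  also have "\<dots> = (\<Sum>i\<in>UNIV. \<Sum>k\<in>UNIV. if E i k then c i k * v$k * (v$k - v$i) else 0)"
    using E_sym c_sym by (intro sum.cong refl) metis
  finally have swapped: "S = \<dots>" .
  have "2 * S = S + S" by simp
  also have "\<dots> = (\<Sum>i\<in>UNIV. \<Sum>k\<in>UNIV. if E i k then c i k * (v$i - v$k)^2 else 0)"
    apply (subst (2) swapped) unfolding S_def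
    by (simp add: sum.distrib[symmetric])
      (intro sum.cong refl, simp add: power2_eq_square algebra_simps)
  finally show ?thesis using form by simp
qed

lemma transpose_laplacian:
  fixes E :: "'n::finite \<Rightarrow> 'n \<Rightarrow> bool"
  assumes E_sym: "\<And>i j. E i j \<Longrightarrow> E j i" and c_sym: "\<And>i j. E i j \<Longrightarrow> c i j = c j i"
  shows "transpose (laplacian E c) = laplacian E c"
  unfolding transpose_def laplacian_def vec_eq_iff using E_sym c_sym by auto

lemma psd_laplacian:
  fixes E :: "'n::finite \<Rightarrow> 'n \<Rightarrow> bool"
  assumes irrefl: "\<And>i. \<not> E i i" and E_sym: "\<And>i j. E i j \<Longrightarrow> E j i"
    and c_sym: "\<And>i j. E i j \<Longrightarrow> c i j = c j i"
    and c_pos: "\<And>i j. E i j \<Longrightarrow> 0 < c i j"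
  shows "psd_matrix (laplacian E c)"
  unfolding psd_matrix_def
proof
  fix v :: "real^'n"
  have "0 \<le> (\<Sum>i\<in>UNIV. \<Sum>k\<in>UNIV. if E i k then c i k * (v$i - v$k)^2 else 0)"
    using c_pos[THEN less_imp_le] by (auto intro!: sum_nonneg)
  then show "0 \<le> v \<bullet> (laplacian E c *v v)"
    using laplacian_quadratic_form[where E=E and c=c and v=v, OF irrefl E_sym c_sym] by simp
qed

lemma laplacian_kernel:
  fixes E :: "'n::finite \<Rightarrow> 'n \<Rightarrow> bool"
  assumes irrefl: "\<And>i. \<not> E i i" and E_sym: "\<And>i j. E i j \<Longrightarrow> E j i"
    and c_sym: "\<And>i j. E i j \<Longrightarrow> c i j = c j i"
    and c_pos: "\<And>i j. E i j \<Longrightarrow> 0 < c i j"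
    and conn: "connected_graph E"
  shows "{v. laplacian E c *v v = 0} = {v. \<exists>a. v = a *\<^sub>R (\<chi> i. 1)}"
proof (intro Collect_cong iffI)
  fix v :: "real^'n"
  assume "laplacian E c *v v = 0"
  then have zero: "(\<Sum>i\<in>UNIV. \<Sum>k\<in>UNIV. if E i k then c i k * (v$i - v$k)^2 else 0) = 0"
    using laplacian_quadratic_form[where E=E and c=c and v=v, OF irrefl E_sym c_sym] by simp
  have nonneg: "\<And>i k. 0 \<le> (if E i k then c i k * (v$i - v$k)^2 else 0)"
    using c_pos[THEN less_imp_le] by auto
  have edge: "v$i = v$k" if "E i k" for i k
  proof -
    have "(\<Sum>k\<in>UNIV. if E i k then c i k * (v$i - v$k)^2 else 0) = 0"
      using zero nonneg by (subst (asm) sum_nonneg_eq_0_iff) (auto intro: sum_nonneg)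
    then have "(if E i k then c i k * (v$i - v$k)^2 else 0) = 0"
      using nonneg by (subst (asm) sum_nonneg_eq_0_iff) auto
    then show ?thesis using that c_pos[OF that] by simp
  qed
  have path: "E\<^sup>*\<^sup>* i j \<Longrightarrow> v$i = v$j" for i j
    by (induction rule: rtranclp_induct) (auto dest: edge)
  have "v = (v $ undefined) *\<^sub>R (\<chi> i. 1)"
    using path conn unfolding connected_graph_def by (simp add: vec_eq_iff)
  then show "\<exists>a. v = a *\<^sub>R (\<chi> i. 1)" by blast
next
  fix v :: "real^'n"
  assume "\<exists>a. v = a *\<^sub>R (\<chi> i. 1)"
  then show "laplacian E c *v v = 0"
    by (auto simp: vec_eq_iff laplacian_mult_vec_nth[where E=E, OF irrefl])
qed

lemma laplacian_mult_vec_eqI: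
  fixes E :: "'n::finite \<Rightarrow> 'n \<Rightarrow> bool"
  assumes irrefl: "\<And>i. \<not> E i i"
    and edge: "\<And>i k. E i k \<Longrightarrow> c i k * (u$i - u$k) = d i k * (v$i - v$k)"
  shows "laplacian E c *v u = laplacian E d *v v"
  by (simp add: vec_eq_iff laplacian_mult_vec_nth[where E=E, OF irrefl] edge)

lemma Kh_sym: "Kh h h2 a b = Kh h h2 b a"
proof (cases "a = b")
  case False
  have "(b - a) / (h b - h a) = (a - b) / (h a - h b)"
    using minus_divide_divide[of "a - b" "h a - h b"] by simp
  then show ?thesis using False unfolding Kh_def by simp
qed (simp add: Kh_def)

lemma Ginv_eq_laplacian:
  "Ginv E w \<alpha> h h2 x = laplacian E (\<lambda>i k. \<alpha> * w i k * Kh h h2 (x$i/\<alpha>) (x$k/\<alpha>))"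
  by (simp add: Ginv_def laplacian_def)

lemma Vfun_has_derivative:
  fixes x :: "real^'n::finite"
  assumes \<alpha>: "\<alpha> \<noteq> 0"
    and H_deriv: "\<And>i. (H has_real_derivative h (x$i/\<alpha>)) (at (x$i/\<alpha>))"
  shows "(Vfun \<alpha> H has_derivative (\<lambda>y. (\<chi> i. h (x$i/\<alpha>)) \<bullet> y)) (at x)"
proof -
  have bl: "bounded_linear (\<lambda>y::real^'n. y$i / \<alpha>)" for i
    using bounded_linear_compose[OF bounded_linear_divide[of \<alpha>] bounded_linear_vec_nth[of i]]
    by simp
  have "((\<lambda>z. H (z$i/\<alpha>)) has_derivative (\<lambda>y. h (x$i/\<alpha>) * (y$i/\<alpha>))) (at x)" for i
    using has_derivative_compose[OF bounded_linear_imp_has_derivative[OF bl]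
        H_deriv[of i, unfolded has_field_derivative_def]]
    by simp
  then have "(Vfun \<alpha> H has_derivative (\<lambda>y. \<alpha> * (\<Sum>i\<in>UNIV. h (x$i/\<alpha>) * (y$i/\<alpha>)))) (at x)"
    unfolding Vfun_def by (intro has_derivative_mult_right has_derivative_sum)
  moreover have "(\<lambda>y. \<alpha> * (\<Sum>i\<in>UNIV. h (x$i/\<alpha>) * (y$i/\<alpha>))) = (\<lambda>y. (\<chi> i. h (x$i/\<alpha>)) \<bullet> y)"
    using \<alpha> by (auto simp: inner_vec_def sum_distrib_left intro!: sum.cong)
  ultimately show ?thesis by simp
qed

locale positive_derivative =
  fixes h h2 :: "real \<Rightarrow> real"
  assumes h_deriv: "\<And>t. 0 < t \<Longrightarrow> (h has_real_derivative h2 t) (at t)"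
    and h2_pos: "\<And>t. 0 < t \<Longrightarrow> 0 < h2 t"
    and h2_cont: "continuous_on {0<..} h2"
begin

lemma h_less:
  assumes "0 < a" "a < b"
  shows "h a < h b"
  using assms(2) by (rule DERIV_pos_imp_increasing) (meson assms(1) h_deriv h2_pos less_le_trans)

lemma h_inj: "0 < a \<Longrightarrow> 0 < b \<Longrightarrow> a \<noteq> b \<Longrightarrow> h a \<noteq> h b"
  using h_less[of a b] h_less[of b a] by (cases "a < b") auto

lemma Kh_mult_diff: "0 < a \<Longrightarrow> 0 < b \<Longrightarrow> Kh h h2 a b * (h a - h b) = a - b"
  unfolding Kh_def using h_inj[of a b] by auto

lemma Kh_mean_value:
  assumes a: "0 < a" and b: "0 < b"
  obtains z where "min a b \<le> z" "z \<le> max a b" "Kh h h2 a b = 1 / h2 z"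
proof (cases "a = b")
  case True
  then show ?thesis using that[of a] by (simp add: Kh_def)
next
  case False
  have "\<And>x. min a b \<le> x \<Longrightarrow> (h has_real_derivative h2 x) (at x)"
    using a b by (intro h_deriv) linarith
  moreover have "min a b < max a b" using False by linarith
  ultimately obtain z where z: "min a b < z" "z < max a b"
      "h (max a b) - h (min a b) = (max a b - min a b) * h2 z"
    using MVT2 by blast
  have "0 < h2 z" using z(1) a b by (intro h2_pos) linarith
  then have "Kh h h2 a b = 1 / h2 z"
    using z(3) False h_inj[OF a b False]
    by (auto simp: Kh_def min_def max_def field_simps split: if_splits)
  then show ?thesis using that[of z] z by simp
qed

lemma Kh_pos:
  assumes "0 < a" "0 < b"
  shows "0 < Kh h h2 a b"
proof -
  obtain z where "min a b \<le> z" "Kh h h2 a b = 1 / h2 z"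
    using Kh_mean_value[OF assms] by metis
  moreover have "0 < h2 z" using calculation(1) assms by (intro h2_pos) linarith
  ultimately show ?thesis by simp
qed

lemma isCont_Kh:
  assumes c: "0 < c" and d: "0 < d"
  shows "isCont (\<lambda>p. Kh h h2 (fst p) (snd p)) (c, d)"
proof (cases "c = d")
  case False
  have h_cont: "isCont h t" if "0 < t" for t using h_deriv[OF that] by (rule DERIV_isCont)
  have "isCont (\<lambda>p. (fst p - snd p) / (h (fst p) - h (snd p))) (c, d)"
    using h_cont[OF c] h_cont[OF d] h_inj[OF c d False]
    by (intro continuous_intros isCont_o2[where f=fst and g=h] isCont_o2[where f=snd and g=h]) auto
  moreover have "open {p::real \<times> real. fst p \<noteq> snd p}"
    by (intro open_Collect_neq continuous_intros)
  then have "eventually (\<lambda>p. p \<in> {p. fst p \<noteq> snd p}) (nhds (c, d))"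
    using False by (intro eventually_nhds_in_open) auto
  then have "eventually (\<lambda>p. (fst p - snd p) / (h (fst p) - h (snd p))
      = Kh h h2 (fst p) (snd p)) (nhds (c, d))"
    by eventually_elim (auto simp: Kh_def)
  ultimately show ?thesis by (simp add: isCont_cong)
next
  case True
  have "isCont (\<lambda>t. 1 / h2 t) c"
    using h2_cont c h2_pos[OF c]
    by (intro continuous_intros) (auto simp: continuous_on_eq_continuous_at)
  show ?thesis
    unfolding continuous_at_eps_delta
  proof (intro allI impI)
    fix e :: real assume "0 < e"
    with \<open>isCont (\<lambda>t. 1 / h2 t) c\<close> obtain r
      where r: "r > 0" "\<And>t. dist t c < r \<Longrightarrow> dist (1 / h2 t) (1 / h2 c) < e"
      unfolding continuous_at_eps_delta by blast
    have "dist (Kh h h2 (fst p) (snd p)) (Kh h h2 c d) < e" if p: "dist p (c, d) < min r c" for p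
    proof -
      obtain a b where ab: "p = (a, b)" by force
      have "dist a c < min r c" and "dist b c < min r c"
        using p True ab dist_fst_le[of p "(c,d)"] dist_snd_le[of p "(c,d)"] by auto
      then have "0 < a" "0 < b" and close: "\<And>z. min a b \<le> z \<Longrightarrow> z \<le> max a b \<Longrightarrow> dist z c < r"
        by (auto simp: dist_real_def)
      then obtain z where "dist z c < r" "Kh h h2 a b = 1 / h2 z"
        by (metis Kh_mean_value)
      then show ?thesis using r(2) ab True by (simp add: Kh_def)
    qed
    then show "\<exists>s>0. \<forall>p. dist p (c, d) < s \<longrightarrow>
        dist (Kh h h2 (fst p) (snd p)) (Kh h h2 (fst (c, d)) (snd (c, d))) < e"
      using r(1) c by (intro exI[of _ "min r c"]) auto
  qed
qed

lemma laplacian_eq_Ginv_mult_gradient: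
  fixes E :: "'n::finite \<Rightarrow> 'n \<Rightarrow> bool"
  assumes irrefl: "\<And>i. \<not> E i i" and \<alpha>: "0 < \<alpha>" and x_pos: "\<And>i. 0 < x$i"
  shows "laplacian E w *v x = Ginv E w \<alpha> h h2 x *v (\<chi> i. h (x$i/\<alpha>))"
  unfolding Ginv_eq_laplacian
proof (rule laplacian_mult_vec_eqI[OF irrefl])
  fix i k
  have "\<alpha> * w i k * Kh h h2 (x$i/\<alpha>) (x$k/\<alpha>) * (h (x$i/\<alpha>) - h (x$k/\<alpha>))
      = \<alpha> * w i k * (x$i/\<alpha> - x$k/\<alpha>)"
    using Kh_mult_diff[of "x$i/\<alpha>" "x$k/\<alpha>"] x_pos \<alpha> by simp
  also have "\<dots> = w i k * (x$i - x$k)" using \<alpha> by (simp add: field_simps)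
  finally show "w i k * (x$i - x$k) = \<alpha> * w i k * Kh h h2 (x$i/\<alpha>) (x$k/\<alpha>)
      * ((\<chi> i. h (x$i/\<alpha>)) $ i - (\<chi> i. h (x$i/\<alpha>)) $ k)"
    by (simp only: vec_lambda_beta)
qed

lemma continuous_on_Ginv_entry:
  assumes \<alpha>: "0 < \<alpha>"
  shows "continuous_on {x::real^'n::finite. \<forall>i. 0 < x$i} (\<lambda>x. Ginv E w \<alpha> h h2 x $ i $ j)"
proof -
  have Kh_cont: "continuous_on {x::real^'n. \<forall>i. 0 < x$i} (\<lambda>x. Kh h h2 (x$i/\<alpha>) (x$k/\<alpha>))"
    for i k :: 'n
  proof (rule continuous_on_compose2[where g="\<lambda>p. Kh h h2 (fst p) (snd p)"
        and f="\<lambda>x. (x$i/\<alpha>, x$k/\<alpha>)", simplified])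
    show "continuous_on ({0<..} \<times> {0<..}) (\<lambda>p. Kh h h2 (fst p) (snd p))"
      by (rule continuous_at_imp_continuous_on) (auto intro: isCont_Kh)
    show "(\<lambda>x. (x$i/\<alpha>, x$k/\<alpha>)) ` {x. \<forall>i. 0 < x$i} \<subseteq> {0<..} \<times> {0<..}"
      using \<alpha> by auto
  qed (use \<alpha> in \<open>auto intro!: continuous_intros\<close>)
  show ?thesis
    unfolding Ginv_def
    by (cases "i = j"; cases "E i j")
      (simp_all, (intro continuous_intros Kh_cont)+)
qed

end

theorem theorem2:
  fixes E :: "'n::finite \<Rightarrow> 'n \<Rightarrow> bool"
    and w :: "'n \<Rightarrow> 'n \<Rightarrow> real"
    and \<alpha> :: real
    and H h h2 :: "real \<Rightarrow> real"
  assumes E_sym: "\<And>i j. E i j \<Longrightarrow> E j i"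
    and E_irrefl: "\<And>i. \<not> E i i"
    and E_conn: "connected_graph E"
    and w_sym: "\<And>i j. E i j \<Longrightarrow> w i j = w j i"
    and w_pos: "\<And>i j. E i j \<Longrightarrow> 0 < w i j"
    and alpha_pos: "0 < \<alpha>"
    and H_deriv: "\<And>t. 0 < t \<Longrightarrow> (H has_real_derivative h t) (at t)"
    and h_deriv: "\<And>t. 0 < t \<Longrightarrow> (h has_real_derivative h2 t) (at t)"
    and h2_cont: "continuous_on {0<..} h2"
    and h2_pos: "\<And>t. 0 < t \<Longrightarrow> 0 < h2 t"
    and H_strict: "strictly_convex_on {0<..} H"
  shows "(\<forall>x \<in> Mset \<alpha>.
      transpose (Ginv E w \<alpha> h h2 x) = Ginv E w \<alpha> h h2 x
    \<and> psd_matrix (Ginv E w \<alpha> h h2 x)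
    \<and> {v. Ginv E w \<alpha> h h2 x *v v = 0} = {v. \<exists>c::real. v = c *\<^sub>R (\<chi> i. 1)}
    \<and> (\<exists>g. (Vfun \<alpha> H has_derivative (\<lambda>y. g \<bullet> y)) (at x)
          \<and> - (laplacian E w *v x) = - (Ginv E w \<alpha> h h2 x *v g)))
    \<and> (\<forall>i j. continuous_on (Mset \<alpha>) (\<lambda>x. Ginv E w \<alpha> h h2 x $ i $ j))"
proof -
  interpret positive_derivative h h2 using h_deriv h2_pos h2_cont by unfold_locales
  have Mset_pos: "Mset \<alpha> \<subseteq> {x. \<forall>i. 0 < x$i}" by (auto simp: Mset_def)
  show ?thesis
  proof (intro conjI ballI allI)
    fix x :: "real^'n" assume "x \<in> Mset \<alpha>"
    then have x_pos: "\<And>i. 0 < x$i" using Mset_pos by auto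
    define c where "c i k = \<alpha> * w i k * Kh h h2 (x$i/\<alpha>) (x$k/\<alpha>)" for i k
    have G: "Ginv E w \<alpha> h h2 x = laplacian E c"
      unfolding Ginv_eq_laplacian c_def ..
    have c_sym: "c i j = c j i" if "E i j" for i j
      using w_sym[OF that] Kh_sym by (simp add: c_def)
    have c_pos: "\<And>i j. E i j \<Longrightarrow> 0 < c i j"
      using w_pos Kh_pos x_pos alpha_pos by (simp add: c_def)
    show "transpose (Ginv E w \<alpha> h h2 x) = Ginv E w \<alpha> h h2 x"
      unfolding G using E_sym c_sym by (rule transpose_laplacian)
    show "psd_matrix (Ginv E w \<alpha> h h2 x)"
      unfolding G using E_irrefl E_sym c_sym c_pos by (rule psd_laplacian)
    show "{v. Ginv E w \<alpha> h h2 x *v v = 0} = {v. \<exists>c::real. v = c *\<^sub>R (\<chi> i. 1)}"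
      unfolding G using E_irrefl E_sym c_sym c_pos E_conn by (rule laplacian_kernel)
    have "(Vfun \<alpha> H has_derivative (\<lambda>y. (\<chi> i. h (x$i/\<alpha>)) \<bullet> y)) (at x)"
      using alpha_pos x_pos by (intro Vfun_has_derivative H_deriv) auto
    moreover have "laplacian E w *v x = Ginv E w \<alpha> h h2 x *v (\<chi> i. h (x$i/\<alpha>))"
      using E_irrefl alpha_pos x_pos by (rule laplacian_eq_Ginv_mult_gradient)
    ultimately show "\<exists>g. (Vfun \<alpha> H has_derivative (\<lambda>y. g \<bullet> y)) (at x)
        \<and> - (laplacian E w *v x) = - (Ginv E w \<alpha> h h2 x *v g)"
      by auto
  next
    fix i j
    show "continuous_on (Mset \<alpha>) (\<lambda>x. Ginv E w \<alpha> h h2 x $ i $ j)"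
      using continuous_on_Ginv_entry[OF alpha_pos] Mset_pos by (rule continuous_on_subset)
  qed
qed

end
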